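(* Let $A\in\mathbb{C}^{m\times n}$ have rank $r$ with $\mathrm{rank}(AA^{\sim})=r>0$, and let $A=BC$ be a full rank factorization of $A$, where $B\in\mathbb{C}^{m\times r}$ and $C\in\mathbb{C}^{r\times n}$ both have rank $r$. Then $$A\{1,2,4^{\mathfrak{m}}\}=\left\{C^{\sim}(CC^{\sim})^{-1}B_L^{-1} : B_L^{-1}\in\mathbb{C}^{r\times m} \text{ is a left inverse of } B\right\}.$$
   Context: For a positive integer $k$, the Minkowski metric matrix of order $k$ is $G_k=\mathrm{diag}(1,-I_{k-1})$ (with $G_1=(1)$). For $A\in\mathbb{C}^{m\times n}$, the Minkowski adjoint is $A^{\sim}=G_nA^*G_m$, where $A^*$ is the conjugate transpose. For $A\in\mathbb{C}^{m\times n}$ and $X\in\mathbb{C}^{n\times m}$ consider the equations $(1)\ AXA=A$, $(2)\ XAX=X$, $(3^{\mathfrak{m}})\ (AX)^{\sim}=AX$, $(4^{\mathfrak{m}})\ (XA)^{\sim}=XA$; $A\{i,\dots,k\}$ denotes the set of all $X$ satisfying the listed equations. A left inverse of $B$ is a matrix $B_L^{-1}$ with $B_L^{-1}B=I_r$. *)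

theory Defs
  imports "Jordan_Normal_Form.Schur_Decomposition" "Jordan_Normal_Form.DL_Rank"
    "Jordan_Normal_Form.Gauss_Jordan_Elimination"
begin

definition minkowski_G :: "nat \<Rightarrow> complex mat" where
  "minkowski_G k = mat k k (\<lambda>(i, j). if i = j then (if i = 0 then 1 else - 1) else 0)"

definition mink_adj :: "complex mat \<Rightarrow> complex mat" where
  "mink_adj A = minkowski_G (dim_col A) * mat_adjoint A * minkowski_G (dim_row A)"

definition mrank :: "complex mat \<Rightarrow> nat" where
  "mrank A = vec_space.rank (dim_row A) A"

definition mink_inv_124 :: "complex mat \<Rightarrow> complex mat set" where
  "mink_inv_124 A = {X \<in> carrier_mat (dim_col A) (dim_row A).
      A * X * A = A \<and> X * A * X = X \<and> mink_adj (X * A) = X * A}"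

end

theory Submission
  imports Defs
begin

(* Put M = C C~. Since A A~ = B M B~ has rank r and M is r x r, M is invertible, and with
   M~ = M also (M^-1)~ = M^-1. A full column rank B is left-cancellable.
   If BL B = I, then X = C~ M^-1 BL gives XA = C~ M^-1 C, which is Minkowski self-adjoint,
   and (1), (2) follow from C C~ M^-1 = I.
   Conversely, for X in A{1,2,4^m}, (4^m) gives XA = C~ B~ X~, so X = XAX = C~ Y for some Y and
   hence X = C~ M^-1 (C X); cancelling B in B (C X B C) = B C gives C X B C = C, so C X B = I
   and BL = C X is a left inverse of B. *)

definition mink_sign :: "nat \<Rightarrow> complex" where
  "mink_sign i = (if i = 0 then 1 else - 1)"

lemma mink_sign_mult_self [simp]: "mink_sign i * mink_sign i = 1"
  by (simp add: mink_sign_def)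

lemma cnj_mink_sign [simp]: "cnj (mink_sign i) = mink_sign i"
  by (simp add: mink_sign_def)

lemma minkowski_G_dims [simp]:
  "dim_row (minkowski_G k) = k" "dim_col (minkowski_G k) = k"
  by (simp_all add: minkowski_G_def)

lemma index_minkowski_G:
  "i < k \<Longrightarrow> j < k \<Longrightarrow> minkowski_G k $$ (i, j) = (if i = j then mink_sign i else 0)"
  by (simp add: minkowski_G_def mink_sign_def)

lemma index_minkowski_G_mult:
  assumes "dim_row X = k" "i < k" "j < dim_col X"
  shows "(minkowski_G k * X) $$ (i, j) = mink_sign i * X $$ (i, j)"
proof -
  have "(minkowski_G k * X) $$ (i, j) = (\<Sum>l<k. minkowski_G k $$ (i, l) * X $$ (l, j))"
    using assms by (simp add: scalar_prod_def lessThan_atLeast0)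
  also have "\<dots> = (\<Sum>l<k. if l = i then mink_sign i * X $$ (i, j) else 0)"
    using assms by (intro sum.cong) (auto simp: index_minkowski_G)
  finally show ?thesis
    using assms by simp
qed

lemma index_mult_minkowski_G:
  assumes "dim_col X = k" "i < dim_row X" "j < k"
  shows "(X * minkowski_G k) $$ (i, j) = X $$ (i, j) * mink_sign j"
proof -
  have "(X * minkowski_G k) $$ (i, j) = (\<Sum>l<k. X $$ (i, l) * minkowski_G k $$ (l, j))"
    using assms by (simp add: scalar_prod_def lessThan_atLeast0)
  also have "\<dots> = (\<Sum>l<k. if l = j then X $$ (i, j) * mink_sign j else 0)"
    using assms by (intro sum.cong) (auto simp: index_minkowski_G)
  finally show ?thesis
    using assms by simp
qed

lemma mat_adjoint_dims [simp]:
  "dim_row (mat_adjoint A) = dim_col A" "dim_col (mat_adjoint A) = dim_row A"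
  unfolding mat_adjoint_def by auto

lemma index_mat_adjoint [simp]:
  "i < dim_col A \<Longrightarrow> j < dim_row A \<Longrightarrow> mat_adjoint A $$ (i, j) = cnj (A $$ (j, i))"
  unfolding mat_adjoint_def by (auto simp: mat_of_rows_def)

lemma mink_adj_dims [simp]:
  "dim_row (mink_adj A) = dim_col A" "dim_col (mink_adj A) = dim_row A"
  by (simp_all add: mink_adj_def)

lemma mink_adj_carrier: "A \<in> carrier_mat m n \<Longrightarrow> mink_adj A \<in> carrier_mat n m"
  by (auto intro!: carrier_matI)

lemma index_mink_adj:
  "i < dim_col A \<Longrightarrow> j < dim_row A \<Longrightarrow>
    mink_adj A $$ (i, j) = mink_sign i * mink_sign j * cnj (A $$ (j, i))"
  unfolding mink_adj_def
  by (subst index_mult_minkowski_G)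
    (auto simp del: index_mult_mat(1) simp: index_minkowski_G_mult)

lemma mink_adj_mink_adj [simp]: "mink_adj (mink_adj A) = A"
proof (rule eq_matI)
  fix i j assume "i < dim_row A" "j < dim_col A"
  then have "mink_adj (mink_adj A) $$ (i, j) =
      mink_sign i * mink_sign j * (mink_sign j * mink_sign i * A $$ (i, j))"
    by (simp add: index_mink_adj)
  then show "mink_adj (mink_adj A) $$ (i, j) = A $$ (i, j)"
    by (simp add: mink_sign_def)
qed simp_all

lemma mink_adj_one [simp]: "mink_adj (1\<^sub>m k) = 1\<^sub>m k"
  by (rule eq_matI) (auto simp: index_mink_adj)

lemma mink_adj_mult:
  assumes "dim_col A = dim_row B"
  shows "mink_adj (A * B) = mink_adj B * mink_adj A"
proof (rule eq_matI)
  fix i j assume ij: "i < dim_row (mink_adj B * mink_adj A)" "j < dim_col (mink_adj B * mink_adj A)"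
  have "mink_adj (A * B) $$ (i, j) =
      mink_sign i * mink_sign j * cnj (\<Sum>l<dim_row B. A $$ (j, l) * B $$ (l, i))"
    using ij assms by (simp add: index_mink_adj scalar_prod_def lessThan_atLeast0)
  also have "\<dots> = (\<Sum>l<dim_row B. (mink_sign i * mink_sign l * cnj (B $$ (l, i))) *
      (mink_sign l * mink_sign j * cnj (A $$ (j, l))))"
    by (simp add: sum_distrib_left) (intro sum.cong refl; simp add: algebra_simps mink_sign_def)
  also have "\<dots> = (mink_adj B * mink_adj A) $$ (i, j)"
    using ij assms by (simp add: index_mink_adj scalar_prod_def lessThan_atLeast0)
  finally show "mink_adj (A * B) $$ (i, j) = (mink_adj B * mink_adj A) $$ (i, j)" .
qed (use assms in auto)

lemma assoc_mult_mat_dims: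
  assumes "dim_col A = dim_row B" "dim_col B = dim_row C"
  shows "A * B * C = A * (B * C)"
proof (rule assoc_mult_mat)
  show "A \<in> carrier_mat (dim_row A) (dim_col A)" "B \<in> carrier_mat (dim_col A) (dim_col B)"
    "C \<in> carrier_mat (dim_col B) (dim_col C)"
    using assms by (auto intro: carrier_matI)
qed

lemma mult_right_inverse_cancel:
  fixes A B Z :: "'a :: semiring_1 mat"
  assumes "A * B = 1\<^sub>m k" "dim_col A = dim_row B" "dim_row Z = dim_col B"
  shows "A * (B * Z) = Z"
proof -
  have "dim_row Z = k"
    using assms(3) arg_cong[OF assms(1), of dim_col] by simp
  moreover have "A * (B * Z) = (A * B) * Z"
    using assms(2,3) by (simp add: assoc_mult_mat_dims)
  ultimately show ?thesis
    using assms(1) by simp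
qed

lemma mink_adj_inverse_eq_self:
  assumes "dim_row M = k" "dim_col M = k" "dim_row Mi = k" "dim_col Mi = k"
    and inv: "M * Mi = 1\<^sub>m k" and adj: "mink_adj M = M"
  shows "mink_adj Mi = Mi"
proof -
  have "mink_adj Mi * M = mink_adj Mi * mink_adj M"
    using adj by simp
  also have "\<dots> = mink_adj (M * Mi)"
    using assms(2,3) by (simp add: mink_adj_mult)
  also have "\<dots> = 1\<^sub>m k"
    using inv by simp
  finally have left_inv: "mink_adj Mi * M = 1\<^sub>m k" .
  have "mink_adj Mi = mink_adj Mi * (M * Mi)"
    using assms by simp
  also have "\<dots> = (mink_adj Mi * M) * Mi"
    using assms by (simp add: assoc_mult_mat_dims)
  finally show ?thesis
    using left_inv assms by simp
qed

lemma (in vec_space) indpt_cols_of_rank: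
  assumes "A \<in> carrier_mat n nc"
  obtains ss where "set ss \<subseteq> set (cols A)" "distinct ss" "length ss = rank A" "lin_indpt (set ss)"
proof -
  obtain S where S: "maximal S (\<lambda>T. T \<subseteq> set (cols A) \<and> lin_indpt T)"
    using maximal_exists[of "\<lambda>T. T \<subseteq> set (cols A) \<and> lin_indpt T" "card (set (cols A))" "{}"]
    by (meson List.finite_set card_mono empty_iff empty_subsetI finite_lin_indpt2 rev_finite_subset)
  then have S_cols: "S \<subseteq> set (cols A)" and "lin_indpt S"
    by (auto simp: maximal_def)
  moreover obtain ss where ss: "set ss = S" "distinct ss"
    using finite_distinct_list[OF finite_subset[OF S_cols]] by blast
  moreover have "length ss = rank A"
    using rank_card_indpt[OF assms S] distinct_card[OF ss(2)] ss(1) by simp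
  ultimately show thesis
    using that by blast
qed

lemma (in vec_space) rank_lt_if_not_distinct_cols:
  assumes "A \<in> carrier_mat n nc" and "\<not> distinct (cols A)"
  shows "rank A < nc"
proof -
  obtain ss where "set ss \<subseteq> set (cols A)" "distinct ss" "length ss = rank A"
    using indpt_cols_of_rank[OF assms(1)] by blast
  then have "rank A \<le> card (set (cols A))"
    using card_mono[of "set (cols A)" "set ss"] by (simp add: distinct_card)
  also have "\<dots> < length (cols A)"
    using assms(2) card_distinct card_length le_neq_implies_less by blast
  finally show ?thesis
    using assms(1) by simp
qed

lemma (in vec_space) full_col_rank_mult_vec_eq_0:
  assumes A: "A \<in> carrier_mat n nc" and rank: "rank A = nc"
    and v: "v \<in> carrier_vec nc" and Av: "A *\<^sub>v v = 0\<^sub>v n"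
  shows "v = 0\<^sub>v nc"
proof (rule ccontr)
  assume "v \<noteq> 0\<^sub>v nc"
  have distinct: "distinct (cols A)"
    using rank_lt_if_not_distinct_cols[OF A] rank by linarith
  have "lin_dep (set (cols A))"
    by (rule lin_depI[OF A v \<open>v \<noteq> 0\<^sub>v nc\<close> Av distinct])
  moreover have "lin_indpt (set (cols A))"
    by (rule full_rank_lin_indpt[OF A rank distinct])
  ultimately show False
    by contradiction
qed

lemma (in vec_space) full_col_rank_cancel_left:
  assumes B: "B \<in> carrier_mat n nc" and rank: "rank B = nc"
    and P: "P \<in> carrier_mat nc k" and Q: "Q \<in> carrier_mat nc k" and BPQ: "B * P = B * Q"
  shows "P = Q"
proof -
  have PQ: "P - Q \<in> carrier_mat nc k"
    using Q by (rule minus_carrier_mat)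
  have "B * (P - Q) = B * P - B * Q"
    by (rule mult_minus_distrib_mat[OF B P Q])
  also have "\<dots> = 0\<^sub>m n k"
    unfolding BPQ using B Q by (intro minus_r_inv_mat) simp
  finally have B_PQ: "B * (P - Q) = 0\<^sub>m n k" .
  have col_PQ: "col (P - Q) j = 0\<^sub>v nc" if "j < k" for j
  proof (rule full_col_rank_mult_vec_eq_0[OF B rank])
    show "col (P - Q) j \<in> carrier_vec nc"
      using col_carrier_vec[OF that PQ] .
    show "B *\<^sub>v col (P - Q) j = 0\<^sub>v n"
      using col_mult2[OF B PQ that] B_PQ that by simp
  qed
  show ?thesis
  proof (rule eq_matI)
    fix i j assume "i < dim_row Q" "j < dim_col Q"
    then have "(P - Q) $$ (i, j) = 0"
      using arg_cong[OF col_PQ[of j], of "\<lambda>v. v $ i"] P Q by simp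
    then show "P $$ (i, j) = Q $$ (i, j)"
      using \<open>i < dim_row Q\<close> \<open>j < dim_col Q\<close> P Q by simp
  qed (use P Q in simp_all)
qed

lemma mat_of_cols_subset_cols_mult:
  assumes X: "X \<in> carrier_mat n k" and Q: "Q \<in> carrier_mat k q"
    and ss: "set ss \<subseteq> set (cols (X * Q))"
  obtains Y where "Y \<in> carrier_mat k (length ss)" "mat_of_cols n ss = X * Y"
proof -
  have "\<exists>j. j < q \<and> X *\<^sub>v col Q j = s" if s: "s \<in> set ss" for s
  proof -
    obtain j where "j < length (cols (X * Q))" "s = cols (X * Q) ! j"
      using ss s by (metis in_set_conv_nth subsetD)
    then have "j < q" "s = col (X * Q) j"
      using X Q by simp_all
    then show ?thesis
      using col_mult2[OF X Q] by auto
  qed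
  then obtain jf where jf: "\<And>s. s \<in> set ss \<Longrightarrow> jf s < q \<and> X *\<^sub>v col Q (jf s) = s"
    by metis
  define Y where "Y = mat_of_cols k (map (\<lambda>s. col Q (jf s)) ss)"
  have Y: "Y \<in> carrier_mat k (length ss)"
    using mat_of_cols_carrier(1)[of k "map (\<lambda>s. col Q (jf s)) ss"] by (simp add: Y_def)
  have "mat_of_cols n ss = X * Y"
  proof (rule mat_col_eqI)
    fix i assume "i < dim_col (X * Y)"
    then have i: "i < length ss"
      by (simp add: Y_def)
    then have s: "ss ! i \<in> set ss"
      by simp
    have "col Y i = col Q (jf (ss ! i))"
      unfolding Y_def using i Q jf[OF s] by (subst col_mat_of_cols) (auto simp: carrier_vecI)
    then have "col (X * Y) i = X *\<^sub>v col Q (jf (ss ! i))"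
      using col_mult2[OF X Y i] by simp
    also have "\<dots> = ss ! i"
      using jf[OF s] by simp
    also have "\<dots> = col (mat_of_cols n ss) i"
    proof (rule col_mat_of_cols[symmetric, OF i])
      have "X *\<^sub>v col Q (jf (ss ! i)) \<in> carrier_vec n"
        using mult_mat_vec_carrier[OF X col_carrier_vec[OF _ Q]] jf[OF s] by blast
      then show "ss ! i \<in> carrier_vec n"
        using jf[OF s] by simp
    qed
    finally show "col (mat_of_cols n ss) i = col (X * Y) i" ..
  qed (use X Y in simp_all)
  with Y show thesis
    by (rule that)
qed

lemma (in vec_space) det_ne_0_if_rank_mult_full:
  assumes P: "P \<in> carrier_mat n k" and M: "M \<in> carrier_mat k k" and Q: "Q \<in> carrier_mat k q"
    and rank: "rank (P * M * Q) = k"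
  shows "det M \<noteq> 0"
proof
  assume "det M = 0"
  \<comment> \<open>k independent columns of P M Q are the columns of P M Y for a square Y, and a kernel
    vector of the singular M Y makes them dependent.\<close>
  have PMQ: "P * M * Q \<in> carrier_mat n q"
    using P M Q by simp
  obtain ss where ss: "set ss \<subseteq> set (cols (P * M * Q))" "distinct ss" "length ss = k"
    "lin_indpt (set ss)"
    using indpt_cols_of_rank[OF PMQ] unfolding rank by blast
  obtain Y where Y: "Y \<in> carrier_mat k k" "mat_of_cols n ss = P * M * Y"
    using mat_of_cols_subset_cols_mult[of "P * M" n k Q q ss] P M Q ss(1,3) by auto
  have "det (M * Y) = 0"
    using det_mult[OF M Y(1)] \<open>det M = 0\<close> by simp
  then obtain v where v: "v \<in> carrier_vec k" "v \<noteq> 0\<^sub>v k" "(M * Y) *\<^sub>v v = 0\<^sub>v k"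
    using det_0_iff_vec_prod_zero_field[OF mult_carrier_mat[OF M Y(1)]] by blast
  have "mat_of_cols n ss *\<^sub>v v = (P * (M * Y)) *\<^sub>v v"
    using Y(2) assoc_mult_mat[OF P M Y(1)] by simp
  also have "\<dots> = P *\<^sub>v ((M * Y) *\<^sub>v v)"
    by (rule assoc_mult_mat_vec[OF P mult_carrier_mat[OF M Y(1)] v(1)])
  also have "\<dots> = 0\<^sub>v n"
    unfolding v(3) using P by (intro eq_vecI) auto
  finally have "mat_of_cols n ss *\<^sub>v v = 0\<^sub>v n" .
  moreover have "cols (mat_of_cols n ss) = ss"
    using ss(1) PMQ by (intro cols_mat_of_cols) (auto dest: cols_dim[THEN subsetD])
  ultimately have "lin_dep (set ss)"
    using lin_depI[of "mat_of_cols n ss" k v] mat_of_cols_carrier(1)[of n ss] v(1,2) ss(2,3)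
    by simp
  with ss(4) show False
    by contradiction
qed

lemma left_inverse_mem_mink_inv_124:
  assumes B: "B \<in> carrier_mat m r" and C: "C \<in> carrier_mat r n" and Mi: "Mi \<in> carrier_mat r r"
    and inv: "C * mink_adj C * Mi = 1\<^sub>m r" "Mi * (C * mink_adj C) = 1\<^sub>m r"
    and BL: "BL \<in> carrier_mat r m" "BL * B = 1\<^sub>m r"
  shows "mink_adj C * Mi * BL \<in> mink_inv_124 (B * C)"
proof -
  let ?X = "mink_adj C * Mi * BL"
  note dims [simp] = carrier_matD[OF B] carrier_matD[OF C] carrier_matD[OF Mi] carrier_matD[OF BL(1)]
  note assoc [simp] = assoc_mult_mat_dims
  have [simp]: "BL * (B * Z) = Z" if "dim_row Z = r" for Z
    using mult_right_inverse_cancel[OF BL(2)] that by simp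
  have [simp]: "C * (mink_adj C * (Mi * Z)) = Z" if "dim_row Z = r" for Z
    using mult_right_inverse_cancel[of C "mink_adj C * Mi" r Z] inv(1) that by simp
  have [simp]: "Mi * (C * (mink_adj C * Z)) = Z" if "dim_row Z = r" for Z
    using mult_right_inverse_cancel[OF inv(2)] that by simp
  have Mi_adj: "mink_adj Mi = Mi"
    using mink_adj_inverse_eq_self[of "C * mink_adj C" r Mi] inv(1) by (simp add: mink_adj_mult)
  have XA: "?X * (B * C) = mink_adj C * (Mi * C)"
    by simp
  have "B * C * ?X * (B * C) = B * C"
    by simp
  moreover have "?X * (B * C) * ?X = ?X"
    by simp
  moreover have "mink_adj (?X * (B * C)) = ?X * (B * C)"
    unfolding XA using Mi_adj by (simp add: mink_adj_mult)
  moreover have "?X \<in> carrier_mat (dim_col (B * C)) (dim_row (B * C))"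
    by (simp add: carrier_matI)
  ultimately show ?thesis
    unfolding mink_inv_124_def by blast
qed

lemma mink_inv_124_left_inverse_form:
  assumes B: "B \<in> carrier_mat m r" and C: "C \<in> carrier_mat r n" and Mi: "Mi \<in> carrier_mat r r"
    and inv: "C * mink_adj C * Mi = 1\<^sub>m r" "Mi * (C * mink_adj C) = 1\<^sub>m r"
    and rank: "vec_space.rank m B = r" and X: "X \<in> mink_inv_124 (B * C)"
  shows "C * X \<in> carrier_mat r m" "C * X * B = 1\<^sub>m r" "X = mink_adj C * Mi * (C * X)"
proof -
  from X have X_carrier: "X \<in> carrier_mat n m" and eq1: "B * C * X * (B * C) = B * C"
    and eq2: "X * (B * C) * X = X" and eq4: "mink_adj (X * (B * C)) = X * (B * C)"
    using B C by (auto simp: mink_inv_124_def)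
  note dims [simp] = carrier_matD[OF B] carrier_matD[OF C] carrier_matD[OF Mi] carrier_matD[OF X_carrier]
  note assoc [simp] = assoc_mult_mat_dims
  have [simp]: "Mi * (C * (mink_adj C * Z)) = Z" if "dim_row Z = r" for Z
    using mult_right_inverse_cancel[OF inv(2)] that by simp
  show "C * X \<in> carrier_mat r m"
    by (simp add: carrier_matI)
  have "B * (C * X * B * C) = B * C"
    using eq1 by simp
  moreover have "C * X * B * C \<in> carrier_mat r n"
    by (simp add: carrier_matI)
  ultimately have CXBC: "C * X * B * C = C"
    using vec_space.full_col_rank_cancel_left[OF B rank _ C] by blast
  have "C * X * B = C * X * B * (C * mink_adj C * Mi)"
    using inv(1) by simp
  also have "\<dots> = (C * X * B * C) * (mink_adj C * Mi)"
    by simp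
  finally show "C * X * B = 1\<^sub>m r"
    unfolding CXBC using inv(1) by simp
  define Y where "Y = mink_adj B * mink_adj X * X"
  have "X = mink_adj (X * (B * C)) * X"
    using eq2 eq4 by simp
  also have "\<dots> = mink_adj C * Y"
    by (simp add: Y_def mink_adj_mult)
  finally have XY: "X = mink_adj C * Y" .
  have "mink_adj C * Mi * (C * (mink_adj C * Y)) = mink_adj C * Y"
    by (simp add: Y_def)
  then show "X = mink_adj C * Mi * (C * X)"
    by (simp flip: XY)
qed

lemma mink_inv_124_full_rank_factorization:
  assumes B: "B \<in> carrier_mat m r" and C: "C \<in> carrier_mat r n" and Mi: "Mi \<in> carrier_mat r r"
    and inv: "C * mink_adj C * Mi = 1\<^sub>m r" "Mi * (C * mink_adj C) = 1\<^sub>m r"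
    and rank: "vec_space.rank m B = r"
  shows "mink_inv_124 (B * C) = {mink_adj C * Mi * BL | BL. BL \<in> carrier_mat r m \<and> BL * B = 1\<^sub>m r}"
proof (intro equalityI subsetI)
  fix X assume "X \<in> mink_inv_124 (B * C)"
  with mink_inv_124_left_inverse_form[OF B C Mi inv rank]
  show "X \<in> {mink_adj C * Mi * BL | BL. BL \<in> carrier_mat r m \<and> BL * B = 1\<^sub>m r}"
    by blast
next
  fix X assume "X \<in> {mink_adj C * Mi * BL | BL. BL \<in> carrier_mat r m \<and> BL * B = 1\<^sub>m r}"
  then show "X \<in> mink_inv_124 (B * C)"
    using left_inverse_mem_mink_inv_124[OF B C Mi inv] by blast
qed

lemma mat_inverse_mult_mink_adj:
  assumes B: "B \<in> carrier_mat m r" and C: "C \<in> carrier_mat r n"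
    and rank: "vec_space.rank m (B * C * mink_adj (B * C)) = r"
  obtains Mi where "mat_inverse (C * mink_adj C) = Some Mi" "Mi \<in> carrier_mat r r"
    "C * mink_adj C * Mi = 1\<^sub>m r" "Mi * (C * mink_adj C) = 1\<^sub>m r"
proof -
  have M: "C * mink_adj C \<in> carrier_mat r r"
    using C by (simp add: mink_adj_carrier)
  have "B * C * mink_adj (B * C) = B * (C * mink_adj C) * mink_adj B"
    using carrier_matD[OF B] carrier_matD[OF C] by (simp add: mink_adj_mult assoc_mult_mat_dims)
  then have "det (C * mink_adj C) \<noteq> 0"
    using vec_space.det_ne_0_if_rank_mult_full[OF B M mink_adj_carrier[OF B]] rank by simp
  then have "C * mink_adj C \<in> Units (ring_mat TYPE(complex) r ())"
    by (rule det_non_zero_imp_unit[OF M])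
  then obtain Mi where "mat_inverse (C * mink_adj C) = Some Mi"
    using mat_inverse(1)[OF M, where b = "()"] by (cases "mat_inverse (C * mink_adj C)") auto
  with mat_inverse(2)[OF M] show thesis
    using that by blast
qed

theorem theorem4p7:
  fixes A B C :: "complex mat" and m n r :: nat
  assumes "A \<in> carrier_mat m n" and "B \<in> carrier_mat m r" and "C \<in> carrier_mat r n"
    and "mrank A = r" and "mrank (A * mink_adj A) = r" and "r > 0"
    and "A = B * C" and "mrank B = r" and "mrank C = r"
  shows "mink_inv_124 A =
    {mink_adj C * the (mat_inverse (C * mink_adj C)) * BL | BL.
       BL \<in> carrier_mat r m \<and> BL * B = 1\<^sub>m r}"
proof -
  note B = \<open>B \<in> carrier_mat m r\<close> and C = \<open>C \<in> carrier_mat r n\<close>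
  have "vec_space.rank m (B * C * mink_adj (B * C)) = r"
    using \<open>mrank (A * mink_adj A) = r\<close> \<open>A = B * C\<close> B by (simp add: mrank_def)
  then obtain Mi where Mi: "mat_inverse (C * mink_adj C) = Some Mi" "Mi \<in> carrier_mat r r"
    and inv: "C * mink_adj C * Mi = 1\<^sub>m r" "Mi * (C * mink_adj C) = 1\<^sub>m r"
    by (rule mat_inverse_mult_mink_adj[OF B C])
  have rank_B: "vec_space.rank m B = r"
    using \<open>mrank B = r\<close> B by (simp add: mrank_def)
  show ?thesis
    unfolding \<open>A = B * C\<close> Mi(1) option.sel
    by (rule mink_inv_124_full_rank_factorization[OF B C Mi(2) inv rank_B])
qed

end
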